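(* Let $\mathfrak{M}$ be a variety of associative rings such that for all finite rings $R,S\in\mathfrak{M}$, $\Gamma(R)\cong\Gamma(S)$ implies $R\cong S$. Then there exist $m\in\mathbb{N}$, $g(x)\in\mathbb{Z}[x]$ and an integer $d$ such that $mx\in T(\mathfrak{M})$ and $dx+x^2g(x)\in T(\mathfrak{M})$, where either $d=1$ or $d=q_1q_2\cdots q_l$ with $q_1,\ldots,q_l$ pairwise distinct prime divisors of $m$.
   Context: All rings are associative, not necessarily commutative and not necessarily with identity. For a ring $R$, the zero-divisor graph $\Gamma(R)$ is the graph whose vertices are all nonzero (one-sided or two-sided) zero-divisors of $R$, two distinct vertices $x,y$ being adjacent iff $xy=0$ or $yx=0$. For a variety $\mathfrak{M}$, $T(\mathfrak{M})$ denotes the T-ideal (in the free associative ring $\mathbb{Z}\langle x_1,x_2,\ldots\rangle$) of all polynomial identities satisfied by all rings of $\mathfrak{M}$. *)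

theory Defs
  imports "HOL-Algebra.Ring" "HOL-Computational_Algebra.Polynomial"
begin

text \<open>We use the HOL-Algebra ring record but ignore its one field: an associative ring
  (not necessarily unital, not necessarily commutative) is an abelian additive group whose
  multiplication is closed, associative and distributive on both sides.\<close>

definition assoc_ring :: "('a, 'b) ring_scheme \<Rightarrow> bool" where
  "assoc_ring R \<longleftrightarrow> abelian_group R
     \<and> (\<forall>x\<in>carrier R. \<forall>y\<in>carrier R. x \<otimes>\<^bsub>R\<^esub> y \<in> carrier R)
     \<and> (\<forall>x\<in>carrier R. \<forall>y\<in>carrier R. \<forall>z\<in>carrier R.
          (x \<otimes>\<^bsub>R\<^esub> y) \<otimes>\<^bsub>R\<^esub> z = x \<otimes>\<^bsub>R\<^esub> (y \<otimes>\<^bsub>R\<^esub> z))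
     \<and> (\<forall>x\<in>carrier R. \<forall>y\<in>carrier R. \<forall>z\<in>carrier R.
          x \<otimes>\<^bsub>R\<^esub> (y \<oplus>\<^bsub>R\<^esub> z) = x \<otimes>\<^bsub>R\<^esub> y \<oplus>\<^bsub>R\<^esub> x \<otimes>\<^bsub>R\<^esub> z
        \<and> (y \<oplus>\<^bsub>R\<^esub> z) \<otimes>\<^bsub>R\<^esub> x = y \<otimes>\<^bsub>R\<^esub> x \<oplus>\<^bsub>R\<^esub> z \<otimes>\<^bsub>R\<^esub> x)"

definition rng_isomorphic :: "('a, 'b) ring_scheme \<Rightarrow> ('c, 'd) ring_scheme \<Rightarrow> bool" where
  "rng_isomorphic R S \<longleftrightarrow> (\<exists>h. bij_betw h (carrier R) (carrier S)
     \<and> (\<forall>x\<in>carrier R. \<forall>y\<in>carrier R.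
          h (x \<oplus>\<^bsub>R\<^esub> y) = h x \<oplus>\<^bsub>S\<^esub> h y \<and> h (x \<otimes>\<^bsub>R\<^esub> y) = h x \<otimes>\<^bsub>S\<^esub> h y))"

definition zd_vertices :: "('a, 'b) ring_scheme \<Rightarrow> 'a set" where
  "zd_vertices R = {x \<in> carrier R. x \<noteq> \<zero>\<^bsub>R\<^esub> \<and>
     (\<exists>y\<in>carrier R. y \<noteq> \<zero>\<^bsub>R\<^esub> \<and> (x \<otimes>\<^bsub>R\<^esub> y = \<zero>\<^bsub>R\<^esub> \<or> y \<otimes>\<^bsub>R\<^esub> x = \<zero>\<^bsub>R\<^esub>))}"

definition zd_adj :: "('a, 'b) ring_scheme \<Rightarrow> 'a \<Rightarrow> 'a \<Rightarrow> bool" where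
  "zd_adj R x y \<longleftrightarrow> x \<in> zd_vertices R \<and> y \<in> zd_vertices R \<and> x \<noteq> y
     \<and> (x \<otimes>\<^bsub>R\<^esub> y = \<zero>\<^bsub>R\<^esub> \<or> y \<otimes>\<^bsub>R\<^esub> x = \<zero>\<^bsub>R\<^esub>)"

definition zd_graph_isomorphic :: "('a, 'b) ring_scheme \<Rightarrow> ('c, 'd) ring_scheme \<Rightarrow> bool" where
  "zd_graph_isomorphic R S \<longleftrightarrow> (\<exists>f. bij_betw f (zd_vertices R) (zd_vertices S)
     \<and> (\<forall>x\<in>zd_vertices R. \<forall>y\<in>zd_vertices R. zd_adj R x y \<longleftrightarrow> zd_adj S (f x) (f y)))"

datatype ncpoly = Var nat | Zero | Add ncpoly ncpoly | Neg ncpoly | Mul ncpoly ncpoly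

fun eval :: "('a, 'b) ring_scheme \<Rightarrow> (nat \<Rightarrow> 'a) \<Rightarrow> ncpoly \<Rightarrow> 'a" where
  "eval R \<sigma> (Var i) = \<sigma> i"
| "eval R \<sigma> Zero = \<zero>\<^bsub>R\<^esub>"
| "eval R \<sigma> (Add p q) = eval R \<sigma> p \<oplus>\<^bsub>R\<^esub> eval R \<sigma> q"
| "eval R \<sigma> (Neg p) = \<ominus>\<^bsub>R\<^esub> eval R \<sigma> p"
| "eval R \<sigma> (Mul p q) = eval R \<sigma> p \<otimes>\<^bsub>R\<^esub> eval R \<sigma> q"

definition holds :: "('a, 'b) ring_scheme \<Rightarrow> ncpoly \<Rightarrow> bool" where
  "holds R p \<longleftrightarrow> (\<forall>\<sigma>. (\<forall>i. \<sigma> i \<in> carrier R) \<longrightarrow> eval R \<sigma> p = \<zero>\<^bsub>R\<^esub>)"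

definition in_variety :: "ncpoly set \<Rightarrow> ('a, 'b) ring_scheme \<Rightarrow> bool" where
  "in_variety \<Sigma> R \<longleftrightarrow> assoc_ring R \<and> (\<forall>p\<in>\<Sigma>. holds R p)"

text \<open>It suffices to
  range over rings whose carrier lies in a fixed countably infinite type (nat): an identity
  failing in some member fails in a finitely generated (hence countable) subring, which is in
  the variety and is isomorphic to a ring carried by a subset of nat.\<close>

definition T_ideal :: "ncpoly set \<Rightarrow> ncpoly set" where
  "T_ideal \<Sigma> = {p. \<forall>R :: nat ring. in_variety \<Sigma> R \<longrightarrow> holds R p}"

fun natmul :: "nat \<Rightarrow> ncpoly \<Rightarrow> ncpoly" where
  "natmul 0 t = Zero"
| "natmul (Suc n) t = Add t (natmul n t)"

definition intmul :: "int \<Rightarrow> ncpoly \<Rightarrow> ncpoly" where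
  "intmul n t = (if n \<ge> 0 then natmul (nat n) t else Neg (natmul (nat (- n)) t))"

text \<open>pw t k = t^(k+1)\<close>

fun pw :: "ncpoly \<Rightarrow> nat \<Rightarrow> ncpoly" where
  "pw t 0 = t"
| "pw t (Suc k) = Mul t (pw t k)"

fun sumt :: "ncpoly list \<Rightarrow> ncpoly" where
  "sumt [] = Zero"
| "sumt (a # l) = Add a (sumt l)"

abbreviation X :: ncpoly where "X \<equiv> Var 0"

text \<open>x^2 g(x) = sum_i g_i x^(i+2)\<close>

definition x2_times :: "int poly \<Rightarrow> ncpoly" where
  "x2_times g = sumt (map (\<lambda>i. intmul (coeff g i) (pw X (Suc i))) [0..<Suc (degree g)])"

end

theory Submission
  imports Defs "HOL-Computational_Algebra.Squarefree"
begin

text \<open>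
  Encode a one-variable polynomial \<open>x f(x) = \<Sum>i. f\<^sub>i x\<^sup>i\<^sup>+\<^sup>1\<close> by \<open>f \<in> \<int>[x]\<close>.  The linear
  coefficients \<open>f\<^sub>0\<close> of the one-variable identities of the variety form an ideal \<open>d\<int>\<close>.  It is not
  zero and \<open>d\<close> is squarefree: if a prime square \<open>p\<^sup>2\<close> divided all linear coefficients of the defining
  identities, then the rings \<open>\<int>/p\<^sup>2\<close> and \<open>(\<int>/p)\<^sup>2\<close> with zero multiplication would both lie in the
  variety; their zero-divisor graphs coincide (complete on \<open>p\<^sup>2 - 1\<close> vertices) although the rings are
  not isomorphic.  An identity \<open>d x + x\<^sup>2 g(x)\<close> thus exists, and replacing \<open>x f(x)\<close> by
  \<open>2x f(2x) - 2\<^sup>n\<^sup>+\<^sup>1 x f(x)\<close> repeatedly lowers its degree while keeping a nonzero multiple of \<open>d\<close> as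
  linear coefficient, which ends with an identity \<open>m x\<close> where \<open>d\<close> divides \<open>m\<close>.
\<close>

section \<open>Rings without one\<close>

locale rng = abelian_group R for R :: "('a, 'b) ring_scheme" (structure) +
  assumes m_closed [intro, simp]: "\<lbrakk>x \<in> carrier R; y \<in> carrier R\<rbrakk> \<Longrightarrow> x \<otimes> y \<in> carrier R"
    and m_assoc: "\<lbrakk>x \<in> carrier R; y \<in> carrier R; z \<in> carrier R\<rbrakk> \<Longrightarrow> (x \<otimes> y) \<otimes> z = x \<otimes> (y \<otimes> z)"
    and l_distr: "\<lbrakk>x \<in> carrier R; y \<in> carrier R; z \<in> carrier R\<rbrakk> \<Longrightarrow> (x \<oplus> y) \<otimes> z = x \<otimes> z \<oplus> y \<otimes> z"
    and r_distr: "\<lbrakk>x \<in> carrier R; y \<in> carrier R; z \<in> carrier R\<rbrakk> \<Longrightarrow> z \<otimes> (x \<oplus> y) = z \<otimes> x \<oplus> z \<otimes> y"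

lemma assoc_ring_imp_rng: "assoc_ring R \<Longrightarrow> rng R"
  unfolding assoc_ring_def rng_def rng_axioms_def by blast

lemma in_variety_imp_rng: "in_variety \<Sigma> R \<Longrightarrow> rng R"
  unfolding in_variety_def by (blast intro: assoc_ring_imp_rng)

context rng
begin

lemma r_null [simp]: "x \<in> carrier R \<Longrightarrow> x \<otimes> \<zero> = \<zero>"
  by (metis r_distr zero_closed m_closed add.l_cancel_one)

lemma l_null [simp]: "x \<in> carrier R \<Longrightarrow> \<zero> \<otimes> x = \<zero>"
  by (metis l_distr zero_closed m_closed add.l_cancel_one)

lemma r_minus: "\<lbrakk>x \<in> carrier R; y \<in> carrier R\<rbrakk> \<Longrightarrow> x \<otimes> (\<ominus> y) = \<ominus> (x \<otimes> y)"
  by (metis r_distr a_inv_closed r_neg r_null m_closed minus_equality)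

lemma l_minus: "\<lbrakk>x \<in> carrier R; y \<in> carrier R\<rbrakk> \<Longrightarrow> (\<ominus> x) \<otimes> y = \<ominus> (x \<otimes> y)"
  by (metis l_distr a_inv_closed r_neg l_null m_closed minus_equality)

lemma add_pow_ldistr: "\<lbrakk>x \<in> carrier R; y \<in> carrier R\<rbrakk> \<Longrightarrow> ([(k::nat)] \<cdot> x) \<otimes> y = [k] \<cdot> (x \<otimes> y)"
  by (induction k) (auto simp: l_distr)

lemma add_pow_rdistr: "\<lbrakk>x \<in> carrier R; y \<in> carrier R\<rbrakk> \<Longrightarrow> x \<otimes> ([(k::nat)] \<cdot> y) = [k] \<cdot> (x \<otimes> y)"
  by (induction k) (auto simp: r_distr)

lemma add_pow_ldistr_int: "\<lbrakk>x \<in> carrier R; y \<in> carrier R\<rbrakk> \<Longrightarrow> ([(k::int)] \<cdot> x) \<otimes> y = [k] \<cdot> (x \<otimes> y)"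
  by (cases "k \<ge> 0") (auto simp: add_pow_int_ge add_pow_int_lt add_pow_ldistr l_minus)

lemma add_pow_rdistr_int: "\<lbrakk>x \<in> carrier R; y \<in> carrier R\<rbrakk> \<Longrightarrow> x \<otimes> ([(k::int)] \<cdot> y) = [k] \<cdot> (x \<otimes> y)"
  by (cases "k \<ge> 0") (auto simp: add_pow_int_ge add_pow_int_lt add_pow_rdistr r_minus)

end

lemma add_pow_int_0 [simp]: "[(0::int)] \<cdot>\<^bsub>R\<^esub> x = \<zero>\<^bsub>R\<^esub>"
  by (simp add: add_pow_def)

lemma add_pow_0 [simp]: "[(0::nat)] \<cdot>\<^bsub>R\<^esub> x = \<zero>\<^bsub>R\<^esub>"
  by (simp add: add_pow_def)

lemma add_pow_Suc: "[Suc k] \<cdot>\<^bsub>R\<^esub> x = [k] \<cdot>\<^bsub>R\<^esub> x \<oplus>\<^bsub>R\<^esub> x"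
  by (simp add: add_pow_def)

lemma add_pow_int_of_nat: "[int n] \<cdot>\<^bsub>R\<^esub> x = [n] \<cdot>\<^bsub>R\<^esub> x"
  by (simp add: add_pow_def int_pow_int)

section \<open>One-variable polynomials without constant term\<close>

text \<open>The value of \<open>x f(x) = \<Sum>i. f\<^sub>i x\<^sup>i\<^sup>+\<^sup>1\<close> at \<open>a\<close>; unlike \<open>f(a)\<close> it makes sense in a ring without one.\<close>

definition eval_x_times :: "('a, 'b) ring_scheme \<Rightarrow> int poly \<Rightarrow> 'a \<Rightarrow> 'a" where
  "eval_x_times R f a = foldr (\<lambda>c s. [c] \<cdot>\<^bsub>R\<^esub> a \<oplus>\<^bsub>R\<^esub> a \<otimes>\<^bsub>R\<^esub> s) (coeffs f) \<zero>\<^bsub>R\<^esub>"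

context rng
begin

lemma eval_x_times_0 [simp]: "eval_x_times R 0 a = \<zero>"
  by (simp add: eval_x_times_def)

lemma eval_x_times_pCons [simp]:
  "a \<in> carrier R \<Longrightarrow> eval_x_times R (pCons c f) a = [c] \<cdot> a \<oplus> a \<otimes> eval_x_times R f a"
  by (cases "c = 0 \<and> f = 0") (auto simp: eval_x_times_def cCons_def)

lemma eval_x_times_closed [intro, simp]: "a \<in> carrier R \<Longrightarrow> eval_x_times R f a \<in> carrier R"
  by (induction f) auto

lemma eval_x_times_1 [simp]: "a \<in> carrier R \<Longrightarrow> eval_x_times R 1 a = a"
  by (simp add: one_pCons)

lemma eval_x_times_add:
  "a \<in> carrier R \<Longrightarrow> eval_x_times R (f + g) a = eval_x_times R f a \<oplus> eval_x_times R g a"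
  by (induction f g rule: poly_induct2) (auto simp: add.int_pow_mult r_distr a_ac)

lemma eval_x_times_smult:
  "a \<in> carrier R \<Longrightarrow> eval_x_times R (smult c f) a = [c] \<cdot> eval_x_times R f a"
  by (induction f) (auto simp: add.int_pow_pow add.int_pow_distrib add_pow_rdistr_int mult.commute)

lemma eval_x_times_uminus: "a \<in> carrier R \<Longrightarrow> eval_x_times R (- f) a = \<ominus> eval_x_times R f a"
  using eval_x_times_smult[of a "-1" f] add.int_pow_neg[of _ 1] by simp

lemma eval_x_times_mult:
  "a \<in> carrier R \<Longrightarrow> a \<otimes> eval_x_times R (f * g) a = eval_x_times R f a \<otimes> eval_x_times R g a"
  by (induction f)
    (auto simp: eval_x_times_add eval_x_times_smult l_distr r_distr m_assoc
       add_pow_ldistr_int add_pow_rdistr_int)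

lemma eval_x_times_scale:
  "a \<in> carrier R \<Longrightarrow> eval_x_times R (smult t (f \<circ>\<^sub>p [:0, t:])) a = eval_x_times R f ([t] \<cdot> a)"
proof (induction f)
  case (pCons c f)
  have "smult t (pCons c f \<circ>\<^sub>p [:0, t:]) = pCons (t * c) (smult t (smult t (f \<circ>\<^sub>p [:0, t:])))"
    by (simp add: pcompose_pCons)
  moreover have "eval_x_times R f ([t] \<cdot> a) = [t] \<cdot> eval_x_times R (f \<circ>\<^sub>p [:0, t:]) a"
    using pCons by (simp add: eval_x_times_smult)
  ultimately show ?case
    using pCons.prems
    by (simp add: eval_x_times_smult add.int_pow_pow add_pow_ldistr_int add_pow_rdistr_int mult.commute)
qed simp

end

section \<open>Evaluating noncommutative polynomials\<close>

text \<open>\<open>x \<cdot> one_var_poly p i\<close> is \<open>p\<close> with \<open>x\<close> substituted for \<open>x\<^sub>i\<close> and \<open>0\<close> for all other variables.\<close>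

fun one_var_poly :: "ncpoly \<Rightarrow> nat \<Rightarrow> int poly" where
  "one_var_poly (Var j) i = (if j = i then 1 else 0)"
| "one_var_poly Zero i = 0"
| "one_var_poly (Add p q) i = one_var_poly p i + one_var_poly q i"
| "one_var_poly (Neg p) i = - one_var_poly p i"
| "one_var_poly (Mul p q) i = pCons 0 (one_var_poly p i * one_var_poly q i)"

fun linear_coeff :: "ncpoly \<Rightarrow> nat \<Rightarrow> int" where
  "linear_coeff (Var j) i = (if j = i then 1 else 0)"
| "linear_coeff Zero i = 0"
| "linear_coeff (Add p q) i = linear_coeff p i + linear_coeff q i"
| "linear_coeff (Neg p) i = - linear_coeff p i"
| "linear_coeff (Mul p q) i = 0"

fun var_bound :: "ncpoly \<Rightarrow> nat" where
  "var_bound (Var j) = Suc j"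
| "var_bound Zero = 0"
| "var_bound (Add p q) = max (var_bound p) (var_bound q)"
| "var_bound (Neg p) = var_bound p"
| "var_bound (Mul p q) = max (var_bound p) (var_bound q)"

lemma coeff_one_var_poly_0: "coeff (one_var_poly p i) 0 = linear_coeff p i"
  by (induction p) auto

lemma (in abelian_group) finsum_uminus:
  assumes "finite A" "f \<in> A \<rightarrow> carrier G"
  shows "(\<Oplus>i\<in>A. \<ominus> f i) = \<ominus> (\<Oplus>i\<in>A. f i)"
proof -
  have "(\<Oplus>i\<in>A. \<ominus> f i) \<oplus> (\<Oplus>i\<in>A. f i) = (\<Oplus>i\<in>A. \<ominus> f i \<oplus> f i)"
    using assms by (simp add: Pi_iff)
  also have "\<dots> = \<zero>"
    using assms by (intro add.finprod_one_eqI) (auto simp: l_neg Pi_iff)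
  finally show ?thesis
    using assms by (intro minus_equality[symmetric]) (auto intro: finsum_closed)
qed

context rng
begin

lemma eval_closed [intro, simp]: "(\<And>i. \<sigma> i \<in> carrier R) \<Longrightarrow> eval R \<sigma> p \<in> carrier R"
  by (induction p) auto

lemma eval_one_var:
  "a \<in> carrier R \<Longrightarrow> eval R (\<lambda>j. if j = i then a else \<zero>) p = eval_x_times R (one_var_poly p i) a"
  by (induction p) (auto simp: eval_x_times_add eval_x_times_uminus eval_x_times_mult)

lemma eval_null_ring:
  assumes null: "\<And>x y. \<lbrakk>x \<in> carrier R; y \<in> carrier R\<rbrakk> \<Longrightarrow> x \<otimes> y = \<zero>"
    and \<sigma>: "\<And>i. \<sigma> i \<in> carrier R" and K: "var_bound p \<le> K"
  shows "eval R \<sigma> p = (\<Oplus>i\<in>{..<K}. [linear_coeff p i] \<cdot> \<sigma> i)"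
  using K
proof (induction p)
  case (Var j)
  have "(\<Oplus>i\<in>{..<K}. [linear_coeff (Var j) i] \<cdot> \<sigma> i) = (\<Oplus>i\<in>{..<K}. if i = j then \<sigma> i else \<zero>)"
    using \<sigma> by (intro finsum_cong') auto
  also have "\<dots> = \<sigma> j"
    using Var \<sigma> by (intro add.finprod_singleton_swap) auto
  finally show ?case by simp
next
  case Zero
  then show ?case by simp
next
  case (Add p q)
  then show ?case
    using \<sigma> by (simp add: add.int_pow_mult Pi_iff)
next
  case (Neg p)
  then show ?case
    using \<sigma> by (simp add: add.int_pow_neg finsum_uminus Pi_iff)
next
  case (Mul p q)
  then show ?case
    using \<sigma> null by simp
qed

end

text \<open>Since \<open>pw t i = t\<^sup>i\<^sup>+\<^sup>1\<close>, this is \<open>\<Sum>i<n. f\<^sub>i x\<^sup>i\<^sup>+\<^sup>1\<close>, i.e. \<open>x f(x)\<close> truncated.\<close>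

definition x_times_ncpoly :: "int poly \<Rightarrow> nat \<Rightarrow> ncpoly" where
  "x_times_ncpoly f n = sumt (map (\<lambda>i. intmul (coeff f i) (pw X i)) [0..<n])"

lemma x_times_ncpoly_pCons:
  "x_times_ncpoly (pCons c f) (Suc n) =
     Add (intmul c X) (sumt (map (\<lambda>i. intmul (coeff f i) (pw X (Suc i))) [0..<n]))"
  by (simp add: x_times_ncpoly_def upt_conv_Cons map_Suc_upt[symmetric] comp_def del: upt_Suc)

lemma x2_times_eq_x_times_ncpoly:
  "Add (intmul d X) (x2_times g) = x_times_ncpoly (pCons d g) (Suc (Suc (degree g)))"
  by (simp only: x_times_ncpoly_pCons x2_times_def)

context rng
begin

lemma eval_natmul: "(\<And>i. \<sigma> i \<in> carrier R) \<Longrightarrow> eval R \<sigma> (natmul n t) = [n] \<cdot> eval R \<sigma> t"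
  by (induction n) (simp_all add: add_pow_Suc a_comm)

lemma eval_intmul: "(\<And>i. \<sigma> i \<in> carrier R) \<Longrightarrow> eval R \<sigma> (intmul k t) = [k] \<cdot> eval R \<sigma> t"
  by (cases "k \<ge> 0") (simp_all add: intmul_def eval_natmul add_pow_int_ge add_pow_int_lt)

lemma eval_sumt_Mul_X:
  "(\<And>i. \<sigma> i \<in> carrier R) \<Longrightarrow>
     eval R \<sigma> (sumt (map (\<lambda>i. intmul (c i) (Mul X (pw X i))) xs)) =
     \<sigma> 0 \<otimes> eval R \<sigma> (sumt (map (\<lambda>i. intmul (c i) (pw X i)) xs))"
  by (induction xs) (simp_all add: eval_intmul r_distr add_pow_rdistr_int)

lemma eval_x_times_ncpoly:
  assumes "\<And>i. \<sigma> i \<in> carrier R" and "\<And>i. n \<le> i \<Longrightarrow> coeff f i = 0"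
  shows "eval R \<sigma> (x_times_ncpoly f n) = eval_x_times R f (\<sigma> 0)"
  using assms(2)
proof (induction n arbitrary: f)
  case 0
  then have "f = 0" by (simp add: poly_eq_iff)
  then show ?case by (simp add: x_times_ncpoly_def)
next
  case (Suc n)
  obtain c g where f: "f = pCons c g" by (cases f)
  have "coeff g i = 0" if "n \<le> i" for i
    using Suc.prems[of "Suc i"] that f by simp
  then have "eval R \<sigma> (x_times_ncpoly g n) = eval_x_times R g (\<sigma> 0)"
    by (rule Suc.IH)
  then show ?case
    unfolding f x_times_ncpoly_pCons
    using assms(1) by (simp add: eval_intmul eval_sumt_Mul_X flip: x_times_ncpoly_def)
qed

lemma eval_intmul_X: "(\<And>i. \<sigma> i \<in> carrier R) \<Longrightarrow> eval R \<sigma> (intmul k X) = eval_x_times R [:k:] (\<sigma> 0)"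
  by (simp add: eval_intmul)

lemma eval_x2_times:
  "(\<And>i. \<sigma> i \<in> carrier R) \<Longrightarrow>
     eval R \<sigma> (Add (intmul d X) (x2_times g)) = eval_x_times R (pCons d g) (\<sigma> 0)"
  unfolding x2_times_eq_x_times_ncpoly by (rule eval_x_times_ncpoly) (simp_all add: coeff_eq_0)

end

section \<open>Rings with zero multiplication\<close>

lemma assoc_ring_null:
  assumes "abelian_group R" and null: "\<And>x y. x \<otimes>\<^bsub>R\<^esub> y = \<zero>\<^bsub>R\<^esub>"
  shows "assoc_ring R"
proof -
  interpret abelian_group R by fact
  show ?thesis
    unfolding assoc_ring_def using null by (simp add: abelian_group_axioms)
qed

lemma in_variety_null:
  fixes R (structure)
  assumes "assoc_ring R" and null: "\<And>x y. x \<otimes> y = \<zero>"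
    and torsion: "\<And>x. x \<in> carrier R \<Longrightarrow> [(n::nat)] \<cdot> x = \<zero>"
    and dvd: "\<And>q i. q \<in> \<Sigma> \<Longrightarrow> int n dvd linear_coeff q i"
  shows "in_variety \<Sigma> R"
  unfolding in_variety_def holds_def
proof (intro conjI assms ballI allI impI)
  interpret rng R by (rule assoc_ring_imp_rng) fact
  fix q and \<sigma> :: "nat \<Rightarrow> _" assume q: "q \<in> \<Sigma>" and \<sigma>: "\<forall>i. \<sigma> i \<in> carrier R"
  have "[linear_coeff q i] \<cdot> \<sigma> i = \<zero>" for i
  proof -
    obtain k where "linear_coeff q i = int n * k" using dvd[OF q] by blast
    then have "[linear_coeff q i] \<cdot> \<sigma> i = [k] \<cdot> ([n] \<cdot> \<sigma> i)"
      using \<sigma> by (simp add: add.int_pow_pow[symmetric] add_pow_int_of_nat)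
    then show ?thesis using \<sigma> torsion by simp
  qed
  then show "eval R \<sigma> q = \<zero>"
    using \<sigma> by (simp add: eval_null_ring[OF null, where K = "var_bound q"])
qed

lemma zd_graph_isomorphic_null:
  assumes "carrier R = carrier S" "\<zero>\<^bsub>R\<^esub> = \<zero>\<^bsub>S\<^esub>"
    and "\<And>x y. x \<otimes>\<^bsub>R\<^esub> y = \<zero>\<^bsub>R\<^esub>" "\<And>x y. x \<otimes>\<^bsub>S\<^esub> y = \<zero>\<^bsub>S\<^esub>"
  shows "zd_graph_isomorphic R S"
proof -
  have "zd_vertices R = zd_vertices S" and "zd_adj R = zd_adj S"
    using assms by (auto simp: zd_vertices_def zd_adj_def fun_eq_iff)
  then show ?thesis
    unfolding zd_graph_isomorphic_def by (intro exI[of _ id]) simp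
qed

lemma rng_isomorphic_torsion:
  assumes "rng_isomorphic R S" "abelian_group R" "abelian_group S"
    and torsion: "\<And>y. y \<in> carrier S \<Longrightarrow> [(n::nat)] \<cdot>\<^bsub>S\<^esub> y = \<zero>\<^bsub>S\<^esub>"
    and x: "x \<in> carrier R"
  shows "[n] \<cdot>\<^bsub>R\<^esub> x = \<zero>\<^bsub>R\<^esub>"
proof -
  interpret R: abelian_group R by fact
  interpret S: abelian_group S by fact
  obtain h where bij: "bij_betw h (carrier R) (carrier S)"
    and hom: "\<And>x y. \<lbrakk>x \<in> carrier R; y \<in> carrier R\<rbrakk> \<Longrightarrow> h (x \<oplus>\<^bsub>R\<^esub> y) = h x \<oplus>\<^bsub>S\<^esub> h y"
    using assms(1) unfolding rng_isomorphic_def by blast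
  have h_closed: "h x \<in> carrier S" if "x \<in> carrier R" for x
    using bij that by (rule bij_betw_apply)
  have h_zero: "h \<zero>\<^bsub>R\<^esub> = \<zero>\<^bsub>S\<^esub>"
    using hom[of "\<zero>\<^bsub>R\<^esub>" "\<zero>\<^bsub>R\<^esub>"] h_closed[of "\<zero>\<^bsub>R\<^esub>"] S.add.l_cancel_one by simp
  have "h ([k] \<cdot>\<^bsub>R\<^esub> x) = [k] \<cdot>\<^bsub>S\<^esub> h x" for k :: nat
    by (induction k) (simp_all add: h_zero add_pow_Suc hom x)
  then have "h ([n] \<cdot>\<^bsub>R\<^esub> x) = h \<zero>\<^bsub>R\<^esub>"
    using torsion h_closed x h_zero by simp
  then show ?thesis
    using bij x by (auto simp: bij_betw_def dest: inj_onD)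
qed

definition cyclic_null_ring :: "nat \<Rightarrow> nat ring" where
  "cyclic_null_ring n =
     \<lparr>carrier = {..<n}, monoid.mult = (\<lambda>_ _. 0), one = 0, zero = 0, add = (\<lambda>x y. (x + y) mod n)\<rparr>"

text \<open>The group \<open>(\<int>/p)\<^sup>2\<close>, with \<open>(u, v)\<close> encoded as \<open>u + p v\<close>.\<close>

definition bicyclic_add :: "nat \<Rightarrow> nat \<Rightarrow> nat \<Rightarrow> nat" where
  "bicyclic_add p x y = (x mod p + y mod p) mod p + p * ((x div p + y div p) mod p)"

definition bicyclic_null_ring :: "nat \<Rightarrow> nat ring" where
  "bicyclic_null_ring p =
     \<lparr>carrier = {..<p * p}, monoid.mult = (\<lambda>_ _. 0), one = 0, zero = 0, add = bicyclic_add p\<rparr>"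

lemma cyclic_null_ring_simps [simp]:
  "carrier (cyclic_null_ring n) = {..<n}" "\<zero>\<^bsub>cyclic_null_ring n\<^esub> = 0"
  "x \<otimes>\<^bsub>cyclic_null_ring n\<^esub> y = 0" "x \<oplus>\<^bsub>cyclic_null_ring n\<^esub> y = (x + y) mod n"
  by (simp_all add: cyclic_null_ring_def)

lemma bicyclic_null_ring_simps [simp]:
  "carrier (bicyclic_null_ring p) = {..<p * p}" "\<zero>\<^bsub>bicyclic_null_ring p\<^esub> = 0"
  "x \<otimes>\<^bsub>bicyclic_null_ring p\<^esub> y = 0" "x \<oplus>\<^bsub>bicyclic_null_ring p\<^esub> y = bicyclic_add p x y"
  by (simp_all add: bicyclic_null_ring_def)

lemma cyclic_null_ring_abelian_group:
  assumes n: "0 < n" shows "abelian_group (cyclic_null_ring n)"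
proof (rule abelian_groupI)
  fix x assume "x \<in> carrier (cyclic_null_ring n)"
  then show "\<exists>y\<in>carrier (cyclic_null_ring n). y \<oplus>\<^bsub>cyclic_null_ring n\<^esub> x = \<zero>\<^bsub>cyclic_null_ring n\<^esub>"
    using n by (intro bexI[of _ "(n - x) mod n"]) (auto simp: mod_add_left_eq)
qed (use n in \<open>auto simp: mod_add_left_eq mod_add_right_eq ac_simps\<close>)

lemma add_pow_cyclic_null_ring:
  "x < n \<Longrightarrow> [(k::nat)] \<cdot>\<^bsub>cyclic_null_ring n\<^esub> x = (k * x) mod n"
  by (induction k) (simp_all add: add_pow_Suc mod_add_right_eq add.commute)

lemma digits_less:
  assumes "u < p" "v < p" shows "u + p * v < p * (p::nat)"
proof -
  have "u + p * v < p * Suc v" using assms by simp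
  also have "\<dots> \<le> p * p" using assms by (intro mult_le_mono2) simp
  finally show ?thesis .
qed

lemma bicyclic_add_mod: "0 < p \<Longrightarrow> bicyclic_add p x y mod p = (x mod p + y mod p) mod p"
  by (simp add: bicyclic_add_def)

lemma bicyclic_add_div: "0 < p \<Longrightarrow> bicyclic_add p x y div p = (x div p + y div p) mod p"
  by (simp add: bicyclic_add_def)

lemma nat_eq_by_mod_div: "\<lbrakk>x mod p = y mod p; x div p = y div p\<rbrakk> \<Longrightarrow> x = (y::nat)"
  by (metis div_mult_mod_eq)

lemma bicyclic_null_ring_abelian_group:
  assumes p: "0 < p" shows "abelian_group (bicyclic_null_ring p)"
proof (rule abelian_groupI)
  fix x y z
  have "bicyclic_add p (bicyclic_add p x y) z = bicyclic_add p x (bicyclic_add p y z)"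
    by (rule nat_eq_by_mod_div[of _ p])
      (simp_all add: p bicyclic_add_mod bicyclic_add_div mod_add_left_eq mod_add_right_eq add.assoc)
  then show "x \<oplus>\<^bsub>bicyclic_null_ring p\<^esub> y \<oplus>\<^bsub>bicyclic_null_ring p\<^esub> z =
      x \<oplus>\<^bsub>bicyclic_null_ring p\<^esub> (y \<oplus>\<^bsub>bicyclic_null_ring p\<^esub> z)"
    by simp
next
  fix x assume "x \<in> carrier (bicyclic_null_ring p)"
  then have x: "x div p < p"
    by (simp add: less_mult_imp_div_less)
  have "bicyclic_add p 0 x = x"
    by (rule nat_eq_by_mod_div[of _ p]) (simp_all add: p x bicyclic_add_mod bicyclic_add_div)
  then show "\<zero>\<^bsub>bicyclic_null_ring p\<^esub> \<oplus>\<^bsub>bicyclic_null_ring p\<^esub> x = x"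
    by simp
  let ?y = "(p - x mod p) mod p + p * ((p - x div p) mod p)"
  have "bicyclic_add p ?y x = 0"
    by (rule nat_eq_by_mod_div[of _ p])
      (simp_all add: p less_imp_le[OF x] bicyclic_add_mod bicyclic_add_div mod_add_left_eq)
  moreover have "?y \<in> carrier (bicyclic_null_ring p)"
    using p by (simp add: digits_less)
  ultimately show "\<exists>y\<in>carrier (bicyclic_null_ring p). y \<oplus>\<^bsub>bicyclic_null_ring p\<^esub> x = \<zero>\<^bsub>bicyclic_null_ring p\<^esub>"
    by auto
next
  fix x y
  show "x \<oplus>\<^bsub>bicyclic_null_ring p\<^esub> y \<in> carrier (bicyclic_null_ring p)"
    using p by (simp add: bicyclic_add_def digits_less)
  show "x \<oplus>\<^bsub>bicyclic_null_ring p\<^esub> y = y \<oplus>\<^bsub>bicyclic_null_ring p\<^esub> x"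
    by (simp add: bicyclic_add_def add.commute)
qed (use p in simp)

lemma add_pow_bicyclic_null_ring:
  assumes "0 < p" "x < p * p"
  shows "[(k::nat)] \<cdot>\<^bsub>bicyclic_null_ring p\<^esub> x = (k * (x mod p)) mod p + p * ((k * (x div p)) mod p)"
  using assms
  by (induction k) (simp_all add: add_pow_Suc bicyclic_add_def mod_add_right_eq add.commute)

lemma int_set_generator:
  fixes D :: "int set"
  assumes closed: "\<And>a b k. \<lbrakk>a \<in> D; b \<in> D\<rbrakk> \<Longrightarrow> a - k * b \<in> D"
    and d: "d \<in> D" "d \<noteq> 0"
  shows "\<exists>l > 0. l \<in> D \<and> (\<forall>a\<in>D. l dvd a)"
proof -
  have "0 \<in> D" "- d \<in> D"
    using closed[OF d(1) d(1), of 1] closed[of 0 d 1] d(1) by simp_all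
  then have "\<bar>d\<bar> \<in> D"
    using d(1) by (cases "d \<ge> 0") simp_all
  then have ex: "\<exists>n::nat. 0 < n \<and> int n \<in> D"
    using d(2) by (intro exI[of _ "nat \<bar>d\<bar>"]) simp
  define l where "l = (LEAST n::nat. 0 < n \<and> int n \<in> D)"
  have l: "0 < l" "int l \<in> D"
    using LeastI_ex[OF ex] unfolding l_def by auto
  have l_min: "l \<le> n" if "0 < n" "int n \<in> D" for n
    unfolding l_def using that by (intro Least_le) simp
  have "int l dvd a" if a: "a \<in> D" for a
  proof (rule ccontr)
    assume "\<not> int l dvd a"
    then have "a mod int l \<noteq> 0" by (simp add: dvd_eq_mod_eq_0)
    then have pos: "0 < a mod int l"
      using pos_mod_sign[of "int l" a] l(1) by linarith
    have "a mod int l \<in> D"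
      using closed[OF a l(2), of "a div int l"] by (simp add: minus_div_mult_eq_mod)
    then have "int l \<le> a mod int l"
      using pos l_min[of "nat (a mod int l)"] by simp
    moreover have "a mod int l < int l" using l(1) by simp
    ultimately show False by linarith
  qed
  then show ?thesis
    using l by (intro exI[of _ "int l"]) simp
qed

lemma squarefree_eq_prod_prime_factors:
  assumes "squarefree (n::nat)" shows "n = \<Prod>(prime_factors n)"
proof -
  have "n \<noteq> 0" using assms by (intro notI) simp
  then have "n = (\<Prod>p\<in>prime_factors n. p ^ multiplicity p n)"
    by (simp add: prod_prime_factors)
  also have "\<dots> = \<Prod>(prime_factors n)"
    using assms \<open>n \<noteq> 0\<close> by (intro prod.cong) (auto simp: squarefree_factorial_semiring')
  finally show ?thesis .
qed

lemma squarefree_dvd_eq_prod_primes: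
  assumes "squarefree (d::nat)" "d dvd m" "d \<noteq> 1"
  shows "\<exists>Q. finite Q \<and> Q \<noteq> {} \<and> (\<forall>q\<in>Q. prime q \<and> q dvd m) \<and> d = \<Prod>Q"
proof (intro exI conjI)
  have "d \<noteq> 0" using assms(1) by (intro notI) simp
  then show "prime_factors d \<noteq> {}"
    using assms(3) by (auto simp: prime_factorization_empty_iff)
  show "\<forall>q\<in>prime_factors d. prime q \<and> q dvd m"
    using assms(2) dvd_trans in_prime_factors_imp_dvd by blast
qed (use assms(1) squarefree_eq_prod_prime_factors in auto)

section \<open>Identities of the variety\<close>

definition one_var_identity :: "ncpoly set \<Rightarrow> int poly \<Rightarrow> bool" where
  "one_var_identity \<Sigma> f \<longleftrightarrow>
     (\<forall>R :: nat ring. in_variety \<Sigma> R \<longrightarrow> (\<forall>a\<in>carrier R. eval_x_times R f a = \<zero>\<^bsub>R\<^esub>))"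

lemma one_var_identity_add:
  assumes "one_var_identity \<Sigma> f" "one_var_identity \<Sigma> g"
  shows "one_var_identity \<Sigma> (f + g)"
  unfolding one_var_identity_def
proof (intro allI impI ballI)
  fix R :: "nat ring" and a assume R: "in_variety \<Sigma> R" and a: "a \<in> carrier R"
  interpret rng R using R by (rule in_variety_imp_rng)
  show "eval_x_times R (f + g) a = \<zero>\<^bsub>R\<^esub>"
    using assms R a by (simp add: one_var_identity_def eval_x_times_add)
qed

lemma one_var_identity_smult:
  assumes "one_var_identity \<Sigma> f" shows "one_var_identity \<Sigma> (smult c f)"
  unfolding one_var_identity_def
proof (intro allI impI ballI)
  fix R :: "nat ring" and a assume R: "in_variety \<Sigma> R" and a: "a \<in> carrier R"
  interpret rng R using R by (rule in_variety_imp_rng)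
  show "eval_x_times R (smult c f) a = \<zero>\<^bsub>R\<^esub>"
    using assms R a by (simp add: one_var_identity_def eval_x_times_smult)
qed

lemma one_var_identity_scale:
  assumes "one_var_identity \<Sigma> f" shows "one_var_identity \<Sigma> (smult t (f \<circ>\<^sub>p [:0, t:]))"
  unfolding one_var_identity_def
proof (intro allI impI ballI)
  fix R :: "nat ring" and a assume R: "in_variety \<Sigma> R" and a: "a \<in> carrier R"
  interpret rng R using R by (rule in_variety_imp_rng)
  show "eval_x_times R (smult t (f \<circ>\<^sub>p [:0, t:])) a = \<zero>\<^bsub>R\<^esub>"
    using assms R a by (simp add: one_var_identity_def eval_x_times_scale)
qed

lemma one_var_identity_one_var_poly: "q \<in> \<Sigma> \<Longrightarrow> one_var_identity \<Sigma> (one_var_poly q i)"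
  unfolding one_var_identity_def
proof (intro allI impI ballI)
  fix R :: "nat ring" and a
  assume R: "in_variety \<Sigma> R" and q: "q \<in> \<Sigma>" and a: "a \<in> carrier R"
  interpret rng R using R by (rule in_variety_imp_rng)
  have "eval R (\<lambda>j. if j = i then a else \<zero>\<^bsub>R\<^esub>) q = \<zero>\<^bsub>R\<^esub>"
    using R q a by (auto simp: in_variety_def holds_def)
  then show "eval_x_times R (one_var_poly q i) a = \<zero>\<^bsub>R\<^esub>"
    using a by (simp add: eval_one_var)
qed

text \<open>Degree reduction: \<open>2 f(2x) - 2\<^sup>n\<^sup>+\<^sup>1 f(x)\<close> kills the leading term of \<open>x f(x)\<close> (of degree \<open>n + 1\<close>) and
  multiplies the linear coefficient by \<open>2 - 2\<^sup>n\<^sup>+\<^sup>1 \<noteq> 0\<close>.\<close>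

lemma one_var_identity_constant:
  assumes "one_var_identity \<Sigma> f" "coeff f 0 \<noteq> 0"
  shows "\<exists>M > 0. coeff f 0 dvd M \<and> one_var_identity \<Sigma> [:M:]"
  using assms
proof (induction "degree f" arbitrary: f rule: less_induct)
  case less
  show ?case
  proof (cases "degree f = 0")
    case True
    then have "[:\<bar>coeff f 0\<bar>:] = smult (sgn (coeff f 0)) f"
      by (metis degree_0_id smult_pCons smult_0_right abs_sgn mult.commute)
    then have "one_var_identity \<Sigma> [:\<bar>coeff f 0\<bar>:]"
      using less.prems by (simp add: one_var_identity_smult)
    then show ?thesis
      using less.prems by (intro exI[of _ "\<bar>coeff f 0\<bar>"]) simp
  next
    case False
    define n where "n = degree f"
    define g where "g = smult 2 (f \<circ>\<^sub>p [:0, 2:]) + smult (- (2 ^ Suc n)) f"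
    have coeff_g: "coeff g i = (2 ^ Suc i - 2 ^ Suc n) * coeff f i" for i
      by (simp add: g_def coeff_pcompose_linear algebra_simps)
    have "degree g < degree f"
    proof -
      have "degree g \<le> n - 1"
        using False by (intro degree_le) (auto simp: coeff_g n_def dest: le_degree)
      then show ?thesis using False n_def by linarith
    qed
    moreover have "one_var_identity \<Sigma> g"
      unfolding g_def using less.prems
      by (intro one_var_identity_add one_var_identity_smult one_var_identity_scale)
    moreover have "coeff g 0 \<noteq> 0"
      using less.prems False by (simp add: coeff_g n_def)
    ultimately obtain M where "M > 0" "coeff g 0 dvd M" "one_var_identity \<Sigma> [:M:]"
      using less.hyps by blast
    moreover have "coeff f 0 dvd coeff g 0"
      by (simp add: coeff_g)
    ultimately show ?thesis
      using dvd_trans by blast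
  qed
qed

lemma T_ideal_if_one_var_identity:
  assumes "one_var_identity \<Sigma> f"
    and "\<And>(R :: nat ring) \<sigma>. \<lbrakk>rng R; \<And>i. \<sigma> i \<in> carrier R\<rbrakk> \<Longrightarrow> eval R \<sigma> p = eval_x_times R f (\<sigma> 0)"
  shows "p \<in> T_ideal \<Sigma>"
  using assms in_variety_imp_rng unfolding T_ideal_def holds_def one_var_identity_def by fastforce

definition zd_graph_determines_rings :: "ncpoly set \<Rightarrow> bool" where
  "zd_graph_determines_rings \<Sigma> \<longleftrightarrow>
     (\<forall>(R :: nat ring) (S :: nat ring). in_variety \<Sigma> R \<and> in_variety \<Sigma> S
        \<and> finite (carrier R) \<and> finite (carrier S)
        \<and> zd_graph_isomorphic R S \<longrightarrow> rng_isomorphic R S)"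

lemma linear_coeff_not_dvd_prime_square:
  assumes hyp: "zd_graph_determines_rings \<Sigma>"
    and p: "prime p"
  shows "\<exists>q\<in>\<Sigma>. \<exists>i. \<not> int (p * p) dvd linear_coeff q i"
proof (rule ccontr)
  assume "\<not> ?thesis"
  then have dvd: "\<And>q i. q \<in> \<Sigma> \<Longrightarrow> int (p * p) dvd linear_coeff q i" by blast
  then have dvd': "\<And>q i. q \<in> \<Sigma> \<Longrightarrow> int p dvd linear_coeff q i"
    using dvd_mult_left of_nat_mult by metis
  let ?A = "cyclic_null_ring (p * p)" and ?B = "bicyclic_null_ring p"
  have p1: "1 < p" using p prime_gt_1_nat by blast
  then have "0 < p" "p < p * p" "1 < p * p" by (auto intro: one_less_mult)
  have A: "abelian_group ?A" and B: "abelian_group ?B"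
    using \<open>0 < p\<close> by (simp_all add: cyclic_null_ring_abelian_group bicyclic_null_ring_abelian_group)
  have "in_variety \<Sigma> ?A"
    using A dvd by (intro in_variety_null[where n = "p * p"] assoc_ring_null)
      (auto simp: add_pow_cyclic_null_ring)
  moreover have "in_variety \<Sigma> ?B"
    using B dvd' \<open>0 < p\<close> by (intro in_variety_null[where n = p] assoc_ring_null)
      (auto simp: add_pow_bicyclic_null_ring)
  moreover have "zd_graph_isomorphic ?A ?B"
    by (rule zd_graph_isomorphic_null) simp_all
  ultimately have "rng_isomorphic ?A ?B"
    using hyp by (simp add: zd_graph_determines_rings_def)
  then have "[p] \<cdot>\<^bsub>?A\<^esub> 1 = \<zero>\<^bsub>?A\<^esub>"
    by (rule rng_isomorphic_torsion[OF _ A B])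
      (use \<open>0 < p\<close> \<open>1 < p * p\<close> in \<open>auto simp: add_pow_bicyclic_null_ring\<close>)
  then show False
    using \<open>p < p * p\<close> p1 by (simp add: add_pow_cyclic_null_ring)
qed

lemma exists_squarefree_one_var_identity:
  assumes hyp: "zd_graph_determines_rings \<Sigma>"
  shows "\<exists>f. one_var_identity \<Sigma> f \<and> coeff f 0 > 0 \<and> squarefree (nat (coeff f 0))"
proof -
  define D where "D = {coeff f 0 | f. one_var_identity \<Sigma> f}"
  have closed: "a - k * b \<in> D" if a: "a \<in> D" and b: "b \<in> D" for a b k
  proof -
    obtain f g where fg: "one_var_identity \<Sigma> f" "one_var_identity \<Sigma> g"
      and "a = coeff f 0" "b = coeff g 0"
      using a b unfolding D_def by blast
    then have "a - k * b = coeff (f + smult (- k) g) 0" by simp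
    moreover have "one_var_identity \<Sigma> (f + smult (- k) g)"
      using fg by (intro one_var_identity_add one_var_identity_smult)
    ultimately show ?thesis unfolding D_def by blast
  qed
  have linear: "linear_coeff q i \<in> D" if "q \<in> \<Sigma>" for q i
    unfolding D_def using one_var_identity_one_var_poly[OF that, of i]
    by (auto simp flip: coeff_one_var_poly_0)
  obtain q i where q: "q \<in> \<Sigma>" and "\<not> int (2 * 2) dvd linear_coeff q i"
    using linear_coeff_not_dvd_prime_square[OF hyp two_is_prime_nat] by blast
  then have "linear_coeff q i \<noteq> 0" by auto
  then obtain l where l: "l > 0" "l \<in> D" "\<And>a. a \<in> D \<Longrightarrow> l dvd a"
    using int_set_generator[OF closed linear[OF q]] by blast
  have "\<not> p ^ 2 dvd nat l" if "prime p" for p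
  proof
    assume "p ^ 2 dvd nat l"
    then have "int (p * p) dvd int (nat l)"
      unfolding int_dvd_int_iff by (simp add: power2_eq_square)
    then have "int (p * p) dvd l"
      using l(1) by simp
    then have "\<forall>q\<in>\<Sigma>. \<forall>i. int (p * p) dvd linear_coeff q i"
      using l(3) linear dvd_trans by blast
    then show False
      using linear_coeff_not_dvd_prime_square[OF hyp \<open>prime p\<close>] by blast
  qed
  then have "squarefree (nat l)"
    using l(1) by (subst squarefree_factorial_semiring) auto
  then show ?thesis
    using l(1,2) unfolding D_def by auto
qed

theorem proposition6:
  fixes \<Sigma> :: "ncpoly set"
  assumes "\<forall>(R :: nat ring) (S :: nat ring). in_variety \<Sigma> R \<and> in_variety \<Sigma> S
             \<and> finite (carrier R) \<and> finite (carrier S)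
             \<and> zd_graph_isomorphic R S \<longrightarrow> rng_isomorphic R S"
  shows "\<exists>(m::nat) (g::int poly) (d::int). m > 0
           \<and> intmul (int m) X \<in> T_ideal \<Sigma>
           \<and> Add (intmul d X) (x2_times g) \<in> T_ideal \<Sigma>
           \<and> (d = 1 \<or> (\<exists>Q::nat set. finite Q \<and> Q \<noteq> {} \<and> (\<forall>q\<in>Q. prime q \<and> q dvd m)
                          \<and> d = int (\<Prod>Q)))"
proof -
  have "zd_graph_determines_rings \<Sigma>"
    using assms unfolding zd_graph_determines_rings_def .
  then obtain f where f: "one_var_identity \<Sigma> f" "coeff f 0 > 0" "squarefree (nat (coeff f 0))"
    using exists_squarefree_one_var_identity by blast
  obtain d g where fg: "f = pCons d g" by (cases f)
  then have d: "d > 0" "squarefree (nat d)" using f(2,3) by simp_all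
  obtain M where M: "M > 0" "d dvd M" "one_var_identity \<Sigma> [:M:]"
    using one_var_identity_constant[OF f(1)] d(1) fg by auto
  have "intmul M X \<in> T_ideal \<Sigma>"
    by (rule T_ideal_if_one_var_identity[OF M(3)] rng.eval_intmul_X)+
  moreover have "Add (intmul d X) (x2_times g) \<in> T_ideal \<Sigma>"
    by (rule T_ideal_if_one_var_identity[OF f(1)[unfolded fg]] rng.eval_x2_times)+
  moreover have "d = 1 \<or> (\<exists>Q. finite Q \<and> Q \<noteq> {} \<and> (\<forall>q\<in>Q. prime q \<and> q dvd nat M) \<and> d = int (\<Prod>Q))"
  proof (cases "d = 1")
    case False
    have "nat d dvd nat M"
      using M(1,2) d(1) by (simp add: nat_dvd_iff)
    moreover have "nat d \<noteq> 1"
      using d(1) False by linarith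
    ultimately obtain Q where "finite Q" "Q \<noteq> {}" "\<forall>q\<in>Q. prime q \<and> q dvd nat M" "nat d = \<Prod>Q"
      by (metis squarefree_dvd_eq_prod_primes[OF d(2)])
    moreover have "d = int (\<Prod>Q)"
      using d(1) by (simp flip: \<open>nat d = \<Prod>Q\<close>)
    ultimately show ?thesis
      by blast
  qed simp
  ultimately show ?thesis
    using M(1) by (intro exI[of _ "nat M"] exI[of _ g] exI[of _ d]) simp
qed

end
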